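(* Let $V$ be an infinite-dimensional vector space over a field $\mathbb{F}$ and $u\in\mathrm{End}(V)$. Assume that $u$ has a dominant eigenvalue $\lambda$ and that $u-\lambda\,\mathrm{id}_V$ has infinite rank. Then there exists a decomposition $V=V_1\oplus V_2$ into linear subspaces stable under $u$ such that: (i) $V_1$ is infinite-dimensional; (ii) the endomorphism $u_{|V_1}$ of $V_1$ has no dominant eigenvalue; (iii) $u(x)=\lambda x$ for all $x\in V_2$.
   Context: For an endomorphism $f$ of an infinite-dimensional vector space $E$, a scalar $\mu$ is a dominant eigenvalue of $f$ if $\operatorname{rk}(f-\mu\,\mathrm{id}_E)<\dim E$. *)

theory Defs
  imports Complex_Main
begin

text \<open>For a subspace S such a basis exists and all
  bases have the same cardinality, so the cardinal of this set is the dimension of S.\<close>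
definition vbasis :: "('a::field \<Rightarrow> 'v::ab_group_add \<Rightarrow> 'v) \<Rightarrow> 'v set \<Rightarrow> 'v set" where
  "vbasis scale S = (SOME B. B \<subseteq> S \<and> \<not> module.dependent scale B \<and> module.span scale B = S)"

definition infinite_dim :: "('a::field \<Rightarrow> 'v::ab_group_add \<Rightarrow> 'v) \<Rightarrow> 'v set \<Rightarrow> bool" where
  "infinite_dim scale S \<longleftrightarrow> infinite (vbasis scale S)"

text \<open>mu is a dominant eigenvalue of the endomorphism of the subspace W induced by f:
  rk(f - mu id) (dimension of the image (f - mu id)(W)) is strictly less than dim W
  (as cardinals).\<close>
definition dominant_eig :: "('a::field \<Rightarrow> 'v::ab_group_add \<Rightarrow> 'v) \<Rightarrow> 'v set \<Rightarrow> ('v \<Rightarrow> 'v) \<Rightarrow> 'a \<Rightarrow> bool" where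
  "dominant_eig scale W f mu \<longleftrightarrow>
     (card_of (vbasis scale ((\<lambda>x. f x - scale mu x) ` W)), card_of (vbasis scale W)) \<in> ordLess"

end

theory Submission
  imports Defs
begin

unbundle cardinal_syntax

text \<open>Write \<open>g = u - \<lambda> id\<close> and \<open>\<kappa> = rk g\<close>. The space is spanned by a basis of \<open>ker g\<close> together
  with \<open>\<kappa>\<close> preimages of a basis of \<open>im g\<close>; as \<open>\<kappa>\<close> is infinite and \<open>\<kappa> < dim V\<close>, this forces
  \<open>dim ker g \<ge> \<kappa>\<close>. Let \<open>V\<^sub>1\<close> be spanned by a basis of \<open>im g\<close>, those preimages and \<open>\<kappa>\<close> independent
  eigenvectors \<open>D \<subseteq> ker g\<close>. Then \<open>im g \<subseteq> V\<^sub>1\<close>, so \<open>V\<^sub>1\<close> is \<open>u\<close>-stable, and \<open>dim V\<^sub>1 = \<kappa>\<close>. For every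
  \<open>\<mu>\<close> the image \<open>(u - \<mu> id)(V\<^sub>1)\<close> has dimension \<open>\<kappa>\<close>: it contains the basis of \<open>im g\<close> if \<open>\<mu> = \<lambda>\<close>,
  and it contains \<open>D\<close> otherwise. Finally \<open>V\<^sub>1 + ker g = V\<close>, so any complement \<open>V\<^sub>2\<close> of
  \<open>V\<^sub>1 \<inter> ker g\<close> inside \<open>ker g\<close> is a complement of \<open>V\<^sub>1\<close> on which \<open>u = \<lambda> id\<close>.\<close>

lemma card_of_Un_ordLeq_infinite:
  assumes "infinite X" "|A| \<le>o |X|" "|B| \<le>o |X|"
  shows "|A \<union> B| \<le>o |X|"
  using card_of_Un_ordLeq_infinite_Field[of "|X|" A B] assms card_of_Card_order
  by (simp add: Field_card_of) blast

lemma card_of_lists_ordLeq_infinite: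
  assumes inf: "infinite C"
  shows "|lists C| \<le>o |C|"
proof -
  define L where "L n = {xs \<in> lists C. length xs = n}" for n
  have L: "|L n| \<le>o |C|" for n
  proof (induction n)
    case 0
    have "L 0 = {[]}" by (auto simp: L_def)
    then show ?case using ordLeq3_finite_infinite[OF _ inf, of "{[]}"] by simp
  next
    case (Suc n)
    have "L (Suc n) = (\<lambda>(x, xs). x # xs) ` (C \<times> L n)"
      by (auto simp: L_def length_Suc_conv image_iff)
    then have "|L (Suc n)| \<le>o |C \<times> L n|" using card_of_image by metis
    also have "|C \<times> L n| \<le>o |C \<times> C|" using card_of_Times_mono2[OF Suc] .
    also have "|C \<times> C| \<le>o |C|"
      using card_of_Times_same_infinite[OF inf] ordIso_iff_ordLeq by blast
    finally show ?case .
  qed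
  have "lists C = (\<Union>n. L n)" by (auto simp: L_def)
  moreover have "|\<Union>n. L n| \<le>o |C|"
    using card_of_UNION_ordLeq_infinite[OF inf] L inf infinite_iff_card_of_nat by blast
  ultimately show ?thesis by simp
qed

lemma card_of_finite_subsets_ordLeq_infinite:
  assumes "infinite C"
  shows "|{F. F \<subseteq> C \<and> finite F}| \<le>o |C|"
proof -
  have "{F. F \<subseteq> C \<and> finite F} \<subseteq> set ` lists C"
    by (auto simp: image_iff dest!: finite_list)
  then have "|{F. F \<subseteq> C \<and> finite F}| \<le>o |set ` lists C|" by (rule card_of_mono1)
  also have "|set ` lists C| \<le>o |lists C|" by (rule card_of_image)
  also have "|lists C| \<le>o |C|" by (rule card_of_lists_ordLeq_infinite[OF assms])
  finally show ?thesis .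
qed

context vector_space
begin

lemma
  assumes "subspace S"
  shows vbasis_subset: "vbasis scale S \<subseteq> S"
    and independent_vbasis: "independent (vbasis scale S)"
    and span_vbasis: "span (vbasis scale S) = S"
proof -
  obtain B where B: "B \<subseteq> S" "independent B" "S \<subseteq> span B" by (rule basis_exists)
  then have "span B = S" using assms span_minimal by blast
  with B have "\<exists>B. B \<subseteq> S \<and> independent B \<and> span B = S" by blast
  from someI_ex[OF this] show "vbasis scale S \<subseteq> S" "independent (vbasis scale S)"
    "span (vbasis scale S) = S"
    unfolding vbasis_def by auto
qed

lemma card_of_independent_ordLeq_spanning:
  assumes ind: "independent B" and sp: "B \<subseteq> span C"
  shows "|B| \<le>o |C|"
proof (cases "finite C")
  case True
  then have "finite B \<and> card B \<le> card C" using independent_span_bound ind sp by blast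
  then obtain f where "f ` B \<subseteq> C" "inj_on f B" using card_le_inj True by blast
  then show ?thesis using card_of_ordLeq by blast
next
  case inf: False
  have "\<exists>F. finite F \<and> F \<subseteq> C \<and> b \<in> span F" if "b \<in> B" for b
  proof -
    obtain t r where t: "b = (\<Sum>a\<in>t. r a *s a)" "finite t" "t \<subseteq> C"
      using sp \<open>b \<in> B\<close> unfolding span_explicit by blast
    have "b \<in> span t" unfolding t(1) by (intro span_sum span_scale span_base)
    with t show ?thesis by blast
  qed
  then obtain \<phi> where \<phi>: "\<And>b. b \<in> B \<Longrightarrow> finite (\<phi> b) \<and> \<phi> b \<subseteq> C \<and> b \<in> span (\<phi> b)"
    by metis
  have "\<phi> ` B \<subseteq> {F. F \<subseteq> C \<and> finite F}" using \<phi> by auto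
  then have image: "|\<phi> ` B| \<le>o |C|"
    by (rule ordLeq_transitive[OF card_of_mono1 card_of_finite_subsets_ordLeq_infinite[OF inf]])
  have fibres: "\<forall>F\<in>\<phi> ` B. |{b\<in>B. \<phi> b = F}| \<le>o |C|"
  proof
    fix F assume "F \<in> \<phi> ` B"
    then have "finite F" using \<phi> by blast
    moreover have "independent {b\<in>B. \<phi> b = F}" by (rule independent_mono[OF ind]) auto
    moreover have "{b\<in>B. \<phi> b = F} \<subseteq> span F" using \<phi> by blast
    ultimately have "finite {b\<in>B. \<phi> b = F}" using independent_span_bound by blast
    then show "|{b\<in>B. \<phi> b = F}| \<le>o |C|" using ordLeq3_finite_infinite inf by blast
  qed
  have "B = (\<Union>F\<in>\<phi> ` B. {b\<in>B. \<phi> b = F})" by auto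
  then show ?thesis using card_of_UNION_ordLeq_infinite[OF inf image fibres] by simp
qed

lemma card_of_independent_ordLeq_vbasis:
  assumes "subspace S" "independent B" "B \<subseteq> S"
  shows "|B| \<le>o |vbasis scale S|"
  using card_of_independent_ordLeq_spanning[OF assms(2)] span_vbasis[OF assms(1)] assms(3)
  by blast

lemma card_of_vbasis_span_ordLeq: "|vbasis scale (span C)| \<le>o |C|"
  using card_of_independent_ordLeq_spanning independent_vbasis vbasis_subset by simp

lemma span_Int_span_diff:
  assumes ind: "independent F" and EF: "E \<subseteq> F"
  shows "span E \<inter> span (F - E) = {0}"
proof -
  have "x = 0" if x: "x \<in> span E" "x \<in> span (F - E)" for x
  proof -
    have "representation F x b = 0" for b
      using representation_extend[OF ind x(1) EF] representation_extend[OF ind x(2)]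
        representation_ne_zero[of E x b] representation_ne_zero[of "F - E" x b] by auto
    moreover have "x \<in> span F" using x(1) span_mono[OF EF] by blast
    ultimately show "x = 0" using sum_nonzero_representation_eq[OF ind] by force
  qed
  then show ?thesis by (auto simp: span_zero)
qed

lemma complement_subspace_exists:
  assumes Z: "subspace Z" and W: "subspace W" and ZW: "Z \<subseteq> W"
  obtains V where "subspace V" "V \<subseteq> W" "Z \<inter> V = {0}"
    "\<And>x. x \<in> W \<Longrightarrow> \<exists>a\<in>Z. \<exists>b\<in>V. x = a + b"
proof -
  let ?E = "vbasis scale Z"
  obtain F where F: "?E \<subseteq> F" "F \<subseteq> W" "independent F" "W \<subseteq> span F"
    using maximal_independent_subset_extend[of ?E W] vbasis_subset[OF Z] independent_vbasis[OF Z] ZW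
    by blast
  have "span (F - ?E) \<subseteq> W" using F(2) W by (intro span_minimal) auto
  moreover have "Z \<inter> span (F - ?E) = {0}"
    using span_Int_span_diff[OF F(3,1)] span_vbasis[OF Z] by simp
  moreover have "\<exists>a\<in>Z. \<exists>b\<in>span (F - ?E). x = a + b" if "x \<in> W" for x
  proof -
    have "F = ?E \<union> (F - ?E)" using F(1) by blast
    then have "x \<in> span (?E \<union> (F - ?E))" using F(4) \<open>x \<in> W\<close> by auto
    then show ?thesis unfolding span_Un span_vbasis[OF Z] by blast
  qed
  ultimately show ?thesis using that[of "span (F - ?E)"] by simp
qed

lemma linear_diff_scale:
  assumes "Vector_Spaces.linear scale scale u"
  shows "Vector_Spaces.linear scale scale (\<lambda>x. u x - c *s x)"
  using assms by (simp add: Vector_Spaces.linear_iff algebra_simps scale_right_diff_distrib)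

lemma range_basis_lift:
  assumes "Vector_Spaces.linear scale scale g"
  obtains C where "|C| \<le>o |vbasis scale (range g)|" "g ` span C = range g"
proof -
  interpret g: Vector_Spaces.linear scale scale g by fact
  let ?B = "vbasis scale (range g)"
  have sub: "subspace (range g)" using g.subspace_image[OF subspace_UNIV] by simp
  obtain c where c: "\<And>b. b \<in> ?B \<Longrightarrow> g (c b) = b"
    using vbasis_subset[OF sub] by (metis image_iff subsetD)
  have "g ` c ` ?B = ?B" using c by (force simp: image_image)
  then have "g ` span (c ` ?B) = range g" using g.span_image span_vbasis[OF sub] by metis
  with card_of_image show ?thesis by (rule that)
qed

lemma card_of_range_basis_ordLeq_kernel_basis:
  assumes lin: "Vector_Spaces.linear scale scale g"
    and inf: "infinite (vbasis scale (range g))"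
    and small: "( |vbasis scale (range g)|, |vbasis scale UNIV| ) \<in> ordLess"
  shows "|vbasis scale (range g)| \<le>o |vbasis scale {x. g x = 0}|"
proof (rule ccontr)
  interpret g: Vector_Spaces.linear scale scale g by fact
  let ?B = "vbasis scale (range g)" and ?K = "vbasis scale {x. g x = 0}"
  have kernel: "span ?K = {x. g x = 0}" using span_vbasis[OF g.subspace_kernel] .
  obtain C where C: "|C| \<le>o |?B|" "g ` span C = range g" using range_basis_lift[OF lin] .
  assume "\<not> |?B| \<le>o |?K|"
  then have "|?K| \<le>o |?B|" using ordLeq_total[OF card_of_Well_order card_of_Well_order] by blast
  then have KC: "|?K \<union> C| \<le>o |?B|" using card_of_Un_ordLeq_infinite[OF inf] C(1) by blast
  have "x \<in> span (?K \<union> C)" for x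
  proof -
    obtain y where y: "y \<in> span C" "g y = g x" using C(2) by (metis rangeI image_iff)
    then have "x - y \<in> span ?K" using kernel by (simp add: g.diff)
    then have "(x - y) + y \<in> span (?K \<union> C)"
      using y(1) span_mono[of ?K "?K \<union> C"] span_mono[of C "?K \<union> C"] by (blast intro: span_add)
    then show ?thesis by simp
  qed
  then have "|vbasis scale UNIV| \<le>o |?K \<union> C|"
    using card_of_independent_ordLeq_spanning[OF independent_vbasis[OF subspace_UNIV]] by blast
  with KC small show False using ordLeq_transitive not_ordLess_ordLeq by blast
qed

lemma eigenvector_in_shifted_image:
  assumes lin: "Vector_Spaces.linear scale scale u" and W: "subspace W"
    and d: "d \<in> W" "u d = lam *s d" and "mu \<noteq> lam"
  shows "d \<in> (\<lambda>x. u x - mu *s x) ` W"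
proof (rule rev_image_eqI)
  let ?e = "inverse (lam - mu) *s d"
  show "?e \<in> W" using W d(1) by (rule subspace_scale)
  have "u ?e - mu *s ?e = (inverse (lam - mu) * (lam - mu)) *s d"
    using lin d(2) by (simp add: Vector_Spaces.linear_iff algebra_simps scale_left_diff_distrib)
  then show "d = u ?e - mu *s ?e" using \<open>mu \<noteq> lam\<close> by simp
qed

lemma not_dominant_eig_if_large_image_and_eigenspace:
  assumes lin: "Vector_Spaces.linear scale scale u" and W: "subspace W"
    and A: "independent A" "A \<subseteq> (\<lambda>x. u x - lam *s x) ` W" "|vbasis scale W| \<le>o |A|"
    and D: "independent D" "D \<subseteq> W" "\<And>d. d \<in> D \<Longrightarrow> u d = lam *s d" "|vbasis scale W| \<le>o |D|"
  shows "\<not> dominant_eig scale W u mu"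
proof -
  let ?I = "(\<lambda>x. u x - mu *s x) ` W"
  interpret u_mu: Vector_Spaces.linear scale scale "\<lambda>x. u x - mu *s x"
    using linear_diff_scale[OF lin] .
  have I: "subspace ?I" using u_mu.subspace_image[OF W] .
  have "|vbasis scale W| \<le>o |vbasis scale ?I|"
  proof (cases "mu = lam")
    case True
    then show ?thesis
      using A card_of_independent_ordLeq_vbasis[OF I] ordLeq_transitive by blast
  next
    case False
    then have "D \<subseteq> ?I" using eigenvector_in_shifted_image[OF lin W] D(2,3) by blast
    then show ?thesis
      using D(1,4) card_of_independent_ordLeq_vbasis[OF I] ordLeq_transitive by blast
  qed
  then show ?thesis unfolding dominant_eig_def using not_ordLess_ordLeq by blast
qed

lemma stable_subspace_without_dominant_eig:
  assumes lin: "Vector_Spaces.linear scale scale u"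
    and dom: "dominant_eig scale UNIV u lam"
    and inf: "infinite_dim scale (range (\<lambda>x. u x - lam *s x))"
  obtains V1 where "subspace V1" "range (\<lambda>x. u x - lam *s x) \<subseteq> V1"
    "(\<lambda>x. u x - lam *s x) ` V1 = range (\<lambda>x. u x - lam *s x)"
    "infinite_dim scale V1" "\<And>mu. \<not> dominant_eig scale V1 u mu"
proof -
  define g where "g x = u x - lam *s x" for x
  let ?B = "vbasis scale (range g)" and ?K = "vbasis scale {x. g x = 0}"
  have lin_g: "Vector_Spaces.linear scale scale g" unfolding g_def by (rule linear_diff_scale[OF lin])
  interpret g: Vector_Spaces.linear scale scale g by fact
  have range_sub: "subspace (range g)" using g.subspace_image[OF subspace_UNIV] by simp
  have B: "?B \<subseteq> range g" "independent ?B" "span ?B = range g"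
    using vbasis_subset[OF range_sub] independent_vbasis[OF range_sub] span_vbasis[OF range_sub] .
  have K: "?K \<subseteq> {x. g x = 0}" "independent ?K"
    using vbasis_subset[OF g.subspace_kernel] independent_vbasis[OF g.subspace_kernel] .
  have inf_B: "infinite ?B" using inf unfolding infinite_dim_def g_def .
  obtain C where C: "|C| \<le>o |?B|" "g ` span C = range g" using range_basis_lift[OF lin_g] .
  have "|?B| \<le>o |?K|"
    using card_of_range_basis_ordLeq_kernel_basis[OF lin_g inf_B] dom
    unfolding dominant_eig_def g_def by simp
  then obtain D where D: "D \<subseteq> ?K" "|?B| =o |D|"
    using internalize_card_of_ordLeq[of ?B "|?K|"] by (auto simp: Field_card_of)
  define V1 where "V1 = span (?B \<union> C \<union> D)"
  have V1: "subspace V1" unfolding V1_def by simp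
  have "span ?B \<subseteq> V1" unfolding V1_def by (rule span_mono) blast
  then have range_V1: "range g \<subseteq> V1" unfolding B(3) .
  have "span C \<subseteq> V1" unfolding V1_def by (rule span_mono) blast
  then have "range g \<subseteq> g ` V1" unfolding C(2)[symmetric] by (rule image_mono)
  then have image_V1: "g ` V1 = range g" by auto
  have D_V1: "D \<subseteq> V1" unfolding V1_def by (blast intro: span_base)
  have "|vbasis scale V1| \<le>o |?B \<union> C \<union> D|" unfolding V1_def by (rule card_of_vbasis_span_ordLeq)
  also have "|?B \<union> C \<union> D| \<le>o |?B|"
  proof (rule card_of_Un_ordLeq_infinite[OF inf_B])
    show "|?B \<union> C| \<le>o |?B|"
      using card_of_Un_ordLeq_infinite[OF inf_B ordLeq_refl[OF card_of_Card_order] C(1)] .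
    show "|D| \<le>o |?B|" using D(2) ordIso_iff_ordLeq by blast
  qed
  finally have dim_V1: "|vbasis scale V1| \<le>o |?B|" .
  have "?B \<subseteq> V1" using B(1) range_V1 by (rule order_trans)
  then have B_V1: "|?B| \<le>o |vbasis scale V1|"
    using card_of_independent_ordLeq_vbasis[OF V1 B(2)] by simp
  show ?thesis
  proof
    show "subspace V1" by (rule V1)
    show "range (\<lambda>x. u x - lam *s x) \<subseteq> V1"
      "(\<lambda>x. u x - lam *s x) ` V1 = range (\<lambda>x. u x - lam *s x)"
      using range_V1 image_V1 unfolding g_def[abs_def] by simp_all
    show "infinite_dim scale V1"
      unfolding infinite_dim_def using card_of_ordLeq_infinite[OF B_V1 inf_B] .
    show "\<not> dominant_eig scale V1 u mu" for mu
    proof (rule not_dominant_eig_if_large_image_and_eigenspace[OF lin V1])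
      show "independent ?B" by (rule B(2))
      show "?B \<subseteq> (\<lambda>x. u x - lam *s x) ` V1"
        using B(1) image_V1 unfolding g_def[abs_def] by simp
      show "|vbasis scale V1| \<le>o |?B|" by (rule dim_V1)
      show "independent D" using K(2) D(1) by (rule independent_mono)
      show "D \<subseteq> V1" by (rule D_V1)
      show "u d = lam *s d" if "d \<in> D" for d using that D(1) K(1) by (auto simp: g_def)
      show "|vbasis scale V1| \<le>o |D|"
        using dim_V1 D(2) ordIso_iff_ordLeq ordLeq_transitive by blast
    qed
  qed
qed

lemma kernel_complement:
  assumes lin: "Vector_Spaces.linear scale scale g" and V1: "subspace V1" "g ` V1 = range g"
  obtains V2 where "subspace V2" "\<And>x. x \<in> V2 \<Longrightarrow> g x = 0" "V1 \<inter> V2 = {0}"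
    "\<And>x. \<exists>a\<in>V1. \<exists>b\<in>V2. x = a + b"
proof -
  interpret g: Vector_Spaces.linear scale scale g by fact
  let ?N = "{x. g x = 0}"
  obtain V2 where V2: "subspace V2" "V2 \<subseteq> ?N" "(V1 \<inter> ?N) \<inter> V2 = {0}"
    "\<And>x. x \<in> ?N \<Longrightarrow> \<exists>a\<in>V1 \<inter> ?N. \<exists>b\<in>V2. x = a + b"
    using complement_subspace_exists[OF subspace_inter[OF V1(1) g.subspace_kernel]
        g.subspace_kernel]
    by blast
  show ?thesis
  proof
    show "V1 \<inter> V2 = {0}" using V2(2,3) by blast
    show "\<exists>a\<in>V1. \<exists>b\<in>V2. x = a + b" for x
    proof -
      obtain y where y: "y \<in> V1" "g y = g x" using V1(2) by (metis rangeI image_iff)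
      then have "x - y \<in> ?N" by (simp add: g.diff)
      then obtain a b where ab: "a \<in> V1" "b \<in> V2" "x - y = a + b" using V2(4) by blast
      then have "x = (y + a) + b" by (simp add: algebra_simps eq_diff_eq[symmetric])
      with ab y show ?thesis using subspace_add[OF V1(1)] by blast
    qed
  qed (use V2 in auto)
qed

end

theorem lemma2:
  fixes scale :: "'a::field \<Rightarrow> 'v::ab_group_add \<Rightarrow> 'v"
    and u :: "'v \<Rightarrow> 'v" and lam :: 'a
  assumes "vector_space scale"
    and "infinite_dim scale UNIV"
    and "Vector_Spaces.linear scale scale u"
    and "dominant_eig scale UNIV u lam"
    and "infinite_dim scale (range (\<lambda>x. u x - scale lam x))"
  shows "\<exists>V1 V2. module.subspace scale V1 \<and> module.subspace scale V2
           \<and> u ` V1 \<subseteq> V1 \<and> u ` V2 \<subseteq> V2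
           \<and> V1 \<inter> V2 = {0} \<and> (\<forall>x. \<exists>a\<in>V1. \<exists>b\<in>V2. x = a + b)
           \<and> infinite_dim scale V1
           \<and> (\<forall>mu. \<not> dominant_eig scale V1 u mu)
           \<and> (\<forall>x\<in>V2. u x = scale lam x)"
proof -
  interpret vector_space scale by fact
  obtain V1 where V1: "subspace V1" "range (\<lambda>x. u x - scale lam x) \<subseteq> V1"
      "(\<lambda>x. u x - scale lam x) ` V1 = range (\<lambda>x. u x - scale lam x)"
      "infinite_dim scale V1" "\<And>mu. \<not> dominant_eig scale V1 u mu"
    using stable_subspace_without_dominant_eig[OF assms(3-5)] by blast
  obtain V2 where V2: "subspace V2" "\<And>x. x \<in> V2 \<Longrightarrow> u x - scale lam x = 0"
      "V1 \<inter> V2 = {0}" "\<And>x. \<exists>a\<in>V1. \<exists>b\<in>V2. x = a + b"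
    using kernel_complement[OF linear_diff_scale[OF assms(3)] V1(1,3)] by blast
  have "u x \<in> V1" if "x \<in> V1" for x
  proof -
    have "(u x - scale lam x) + scale lam x \<in> V1"
      using V1(2) subspace_add[OF V1(1)] subspace_scale[OF V1(1) that] by blast
    then show ?thesis by simp
  qed
  moreover have eigen: "u x = scale lam x" if "x \<in> V2" for x using V2(2)[OF that] by simp
  moreover have "u x \<in> V2" if "x \<in> V2" for x
    using eigen[OF that] subspace_scale[OF V2(1) that] by simp
  ultimately show ?thesis using V1 V2 by blast
qed

end
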